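(* Let $(X_1,X_2)$ be a preliminary and a primary test statistic for one-sided hypotheses, with (continuous, strictly increasing) marginal CDFs $F_{0;X_1}$ and $F_{0;X_2}$ under the true null. Assume the classical errors-in-variables model $\widetilde X_1=X_1+\eta$, where $\eta$ is independent of $(X_1,X_2)$, and the probability density function of $X_1$ under the true null and the probability density function of $\eta$ are both symmetric with respect to $0$. Set $(p_1,p_2)=(F_{0;X_1}(X_1),F_{0;X_2}(X_2))$ and $\tilde p_1=F_{0;X_1}(\widetilde X_1)$ for left-sided hypotheses, or $(p_1,p_2)=(1-F_{0;X_1}(X_1),1-F_{0;X_2}(X_2))$ and $\tilde p_1=1-F_{0;X_1}(\widetilde X_1)$ for right-sided hypotheses. If the joint probability density function of $(p_1,p_2)$ under the true null is centrally symmetric with respect to $(1/2,1/2)$, i.e. $f_0(p_1,p_2)=f_0(1-p_1,1-p_2)$, then the joint probability density function of $(\tilde p_1,p_2)$ under the true null is also centrally symmetric with respect to $(1/2,1/2)$. *)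

theory Defs
  imports "HOL-Probability.Probability"
begin

definition pval :: "bool \<Rightarrow> (real \<Rightarrow> real) \<Rightarrow> real \<Rightarrow> real" where
  "pval left F x = (if left then F x else 1 - F x)"

end

theory Submission
  imports Defs
begin

(*
  Symmetry of the density of X1 gives F1 (-x) = 1 - F1 x, so the p-value map u = pval left F1
  satisfies u (-x) = 1 - u x. As u has a measurable left inverse, central symmetry of the law of
  (u X1, p2) becomes invariance of the law of (X1, p2) under (x, z) \<mapsto> (-x, 1 - z). The noise eta is
  symmetric and independent of (X1, p2), so the law of (eta, X1, p2) is invariant under
  (e, x, z) \<mapsto> (-e, -x, 1 - z), and this map is carried by (e, x, z) \<mapsto> (u (x + e), z) to the central
  reflection. Hence the law of (u (X1 + eta), p2) is centrally symmetric, and so is its density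
  almost everywhere.
*)

lemma measurable_left_inverse_strict_mono:
  fixes F :: "real \<Rightarrow> real"
  assumes "continuous_on UNIV F" "strict_mono F"
  obtains G where "G \<in> borel_measurable borel" "\<And>x. G (F x) = x"
proof
  define G where "G y = (if y \<in> range F then inv F y else 0)" for y
  have "inj F" using assms(2) strict_mono_imp_inj_on by blast
  then show GF: "G (F x) = x" for x by (simp add: G_def)
  have "connected (range F)" using connected_continuous_image[OF assms(1) connected_UNIV] .
  then have "range F \<in> sets borel"
    by (intro real_interval_borel_measurable) (simp add: is_interval_connected_1)
  moreover have "mono_on (range F) G"
  proof (rule mono_onI)
    fix r s assume "r \<in> range F" "s \<in> range F" "r \<le> s"
    then obtain a b where "r = F a" "s = F b" by auto
    with \<open>r \<le> s\<close> show "G r \<le> G s" using GF assms(2) by (simp add: strict_mono_less_eq)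
  qed
  moreover have "mono_on (- range F) G" by (rule mono_onI) (simp add: G_def)
  ultimately show "G \<in> borel_measurable borel"
    by (intro borel_measurable_piecewise_mono[of "{range F, - range F}"]) auto
qed

lemma distr_density_involution:
  assumes inv: "distr N N R = N" and [measurable]: "R \<in> measurable N N" "\<phi> \<in> borel_measurable N"
    and invol: "\<And>x. x \<in> space N \<Longrightarrow> R (R x) = x"
  shows "distr (density N \<phi>) N R = density N (\<lambda>x. \<phi> (R x))"
proof -
  have "density N (\<lambda>x. \<phi> (R x)) = density (distr N N R) (\<lambda>x. \<phi> (R x))"
    by (simp add: inv)
  also have "\<dots> = distr (density N (\<lambda>x. \<phi> (R (R x)))) N R"
    by (rule density_distr) auto
  also have "density N (\<lambda>x. \<phi> (R (R x))) = density N \<phi>"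
    by (rule density_cong) (auto simp: invol)
  finally show ?thesis ..
qed

lemma distr_invariant_transfer:
  assumes inv: "distr (distr M N Y) N R = distr M N Y"
    and [measurable]: "Y \<in> measurable M N" "R \<in> measurable N N" "L \<in> measurable N K"
      "S \<in> measurable K K"
    and W: "\<And>\<omega>. \<omega> \<in> space M \<Longrightarrow> W \<omega> = L (Y \<omega>)"
    and eqv: "\<And>\<omega>. \<omega> \<in> space M \<Longrightarrow> S (L (Y \<omega>)) = L (R (Y \<omega>))"
  shows "distr (distr M K W) K S = distr M K W"
proof -
  have law_W: "distr M K W = distr (distr M N Y) K L"
    by (subst distr_distr) (auto simp: W intro!: distr_cong)
  have "distr (distr M K W) K S = distr M K (\<lambda>\<omega>. L (R (Y \<omega>)))"
    unfolding law_W by (simp add: distr_distr comp_def eqv cong: distr_cong)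
  also have "\<dots> = distr (distr (distr M N Y) N R) K L"
    by (simp add: distr_distr comp_def)
  finally show ?thesis by (simp add: inv law_W)
qed

lemma pair_measure_distr_invariant:
  assumes "a \<in> measurable P A" "b \<in> measurable Q B" "sigma_finite_measure Q"
    and "distr P A a = P" "distr Q B b = Q"
  shows "distr (P \<Otimes>\<^sub>M Q) (A \<Otimes>\<^sub>M B) (\<lambda>(x, y). (a x, b y)) = P \<Otimes>\<^sub>M Q"
  using pair_measure_distr[of a P A b Q B] assms by simp

lemma (in prob_space) indep_set_vimage_compose:
  assumes indep: "indep_set A {Y -` B \<inter> space M | B. B \<in> sets T}"
    and Y: "Y \<in> measurable M T" and f: "f \<in> measurable T T'"
  shows "indep_set A {(\<lambda>\<omega>. f (Y \<omega>)) -` B \<inter> space M | B. B \<in> sets T'}"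
proof -
  have sub: "{(\<lambda>\<omega>. f (Y \<omega>)) -` B \<inter> space M | B. B \<in> sets T'} \<subseteq> {Y -` B \<inter> space M | B. B \<in> sets T}"
  proof safe
    fix B assume "B \<in> sets T'"
    then have "f -` B \<inter> space T \<in> sets T" using f by (rule measurable_sets[rotated])
    moreover have "(\<lambda>\<omega>. f (Y \<omega>)) -` B \<inter> space M = Y -` (f -` B \<inter> space T) \<inter> space M"
      using measurable_space[OF Y] by auto
    ultimately show "\<exists>B'. (\<lambda>\<omega>. f (Y \<omega>)) -` B \<inter> space M = Y -` B' \<inter> space M \<and> B' \<in> sets T"
      by blast
  qed
  show ?thesis
    unfolding indep_set_def
    by (rule indep_sets_mono_sets[OF indep[unfolded indep_set_def]]) (use sub in \<open>auto split: bool.split\<close>)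
qed

lemma (in prob_space) indep_set_distr_pair:
  assumes indep: "indep_set {X -` A \<inter> space M | A. A \<in> sets S} {Y -` B \<inter> space M | B. B \<in> sets T}"
    and X: "random_variable S X" and Y: "random_variable T Y"
  shows "distr M (S \<Otimes>\<^sub>M T) (\<lambda>\<omega>. (X \<omega>, Y \<omega>)) = distr M S X \<Otimes>\<^sub>M distr M T Y"
proof -
  interpret X: prob_space "distr M S X" by (rule prob_space_distr) fact
  interpret Y: prob_space "distr M T Y" by (rule prob_space_distr) fact
  interpret XY: pair_prob_space "distr M S X" "distr M T Y" ..
  have XY: "random_variable (S \<Otimes>\<^sub>M T) (\<lambda>\<omega>. (X \<omega>, Y \<omega>))"
    using X Y by (rule measurable_Pair)
  show ?thesis
  proof (rule pair_measure_eqI[symmetric])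
    fix A B assume A: "A \<in> sets (distr M S X)" and B: "B \<in> sets (distr M T Y)"
    have "emeasure (distr M (S \<Otimes>\<^sub>M T) (\<lambda>\<omega>. (X \<omega>, Y \<omega>))) (A \<times> B)
        = emeasure M ((X -` A \<inter> space M) \<inter> (Y -` B \<inter> space M))"
      using A B by (subst emeasure_distr[OF XY]) (auto intro!: arg_cong[where f="emeasure M"])
    also have "\<dots> = emeasure M (X -` A \<inter> space M) * emeasure M (Y -` B \<inter> space M)"
    proof -
      have "prob ((X -` A \<inter> space M) \<inter> (Y -` B \<inter> space M)) = prob (X -` A \<inter> space M) * prob (Y -` B \<inter> space M)"
        by (rule indep_setD[OF indep]) (use A B in auto)
      then show ?thesis by (simp add: emeasure_eq_measure ennreal_mult)
    qed
    also have "\<dots> = emeasure (distr M S X) A * emeasure (distr M T Y) B"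
      using X Y A B by (simp add: emeasure_distr)
    finally show "emeasure (distr M S X) A * emeasure (distr M T Y) B
        = emeasure (distr M (S \<Otimes>\<^sub>M T) (\<lambda>\<omega>. (X \<omega>, Y \<omega>))) (A \<times> B)" ..
  qed (auto intro: X.sigma_finite_measure_axioms Y.sigma_finite_measure_axioms)
qed

lemma (in prob_space) indep_set_distr_pair_compose:
  assumes indep: "indep_set {X -` A \<inter> space M | A. A \<in> sets S} {Y -` B \<inter> space M | B. B \<in> sets T}"
    and X: "random_variable S X" and Y: "random_variable T Y" and f: "f \<in> measurable T T'"
  shows "distr M (S \<Otimes>\<^sub>M T') (\<lambda>\<omega>. (X \<omega>, f (Y \<omega>))) = distr M S X \<Otimes>\<^sub>M distr M T' (\<lambda>\<omega>. f (Y \<omega>))"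
  using X Y f by (intro indep_set_distr_pair indep_set_vimage_compose[OF indep Y f]) auto

lemma distributed_distr_invariant:
  assumes Y: "distributed M N Y f" and N_inv: "distr N N R = N" and [measurable]: "R \<in> measurable N N"
    and invol: "\<And>x. x \<in> space N \<Longrightarrow> R (R x) = x"
    and f_inv: "\<And>x. x \<in> space N \<Longrightarrow> f (R x) = f x"
  shows "distr (distr M N Y) N R = distr M N Y"
proof -
  have [measurable]: "f \<in> borel_measurable N"
    using Y by (rule distributed_borel_measurable)
  have "distr (density N f) N R = density N (\<lambda>x. f (R x))"
    by (rule distr_density_involution[OF N_inv]) (auto simp: invol)
  also have "\<dots> = density N f"
    by (rule density_cong) (auto simp: f_inv)
  finally show ?thesis
    by (simp add: distributed_distr_eq_density[OF Y])
qed

lemma (in prob_space) distributed_AE_invariant: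
  assumes Y: "distributed M N Y h" and N_inv: "distr N N R = N" and [measurable]: "R \<in> measurable N N"
    and invol: "\<And>x. x \<in> space N \<Longrightarrow> R (R x) = x"
    and law_inv: "distr (distr M N Y) N R = distr M N Y"
  shows "AE x in N. h (R x) = h x"
proof -
  note law = distributed_distr_eq_density[OF Y]
  have [measurable]: "h \<in> borel_measurable N"
    using Y by (rule distributed_borel_measurable)
  have "density N (\<lambda>x. h (R x)) = density N h"
    using law_inv distr_density_involution[OF N_inv] invol by (simp add: law)
  moreover have "sigma_finite_measure (density N h)"
    unfolding law[symmetric]
    by (intro prob_space_imp_sigma_finite prob_space_distr distributed_measurable[OF Y])
  ultimately show ?thesis
    by (subst sigma_finite_density_unique[symmetric]) auto
qed

lemma (in real_distribution) cdf_uminus: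
  assumes sym: "distr M borel uminus = M" and cont: "isCont (cdf M) x"
  shows "cdf M (- x) = 1 - cdf M x"
proof -
  have "cdf M (- x) = measure (distr M borel uminus) {.. - x}"
    by (simp add: sym cdf_def)
  also have "\<dots> = measure M (uminus -` {.. - x} \<inter> space M)"
    by (rule measure_distr) auto
  also have "\<dots> = measure M {x..}"
    by (rule arg_cong[where f="measure M"]) auto
  also have "\<dots> = 1 - measure M {..<x}"
  proof -
    have "{x..} = space M - {..<x}" by auto
    then show ?thesis using prob_compl[of "{..<x}"] by simp
  qed
  also have "measure M {..<x} = cdf M x"
  proof -
    have "cdf M x = measure M ({..<x} \<union> {x})"
      unfolding cdf_def by (intro arg_cong2[where f=measure]) auto
    also have "\<dots> = measure M {..<x} + measure M {x}"
      by (rule finite_measure_Union) auto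
    finally show ?thesis using cont by (simp add: isCont_cdf)
  qed
  finally show ?thesis .
qed

lemma distributed_symmetric_distr_uminus:
  fixes X :: "'a \<Rightarrow> real"
  assumes X: "distributed M lborel X f" and f_even: "\<And>x. f (- x) = f x"
  shows "distr (distr M borel X) borel uminus = distr M borel X"
proof -
  have [measurable]: "f \<in> borel_measurable borel" using X by (simp add: distributed_def)
  have law: "distr M borel X = density lborel f"
    using X by (simp add: distributed_def cong: distr_cong)
  have "density lborel f = density (distr lborel borel uminus) f"
    unfolding lborel_distr_uminus ..
  also have "\<dots> = distr (density lborel (\<lambda>x. f (- x))) borel uminus"
    by (rule density_distr) auto
  also have "(\<lambda>x. f (- x)) = f"
    using f_even by auto
  finally show ?thesis
    unfolding law by (rule sym)
qed

lemma borel_measurable_pval [measurable]: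
  assumes [measurable]: "F \<in> borel_measurable borel"
  shows "pval left F \<in> borel_measurable borel"
  unfolding pval_def by measurable

lemma pval_uminus:
  assumes "\<And>x. F (- x) = 1 - F x"
  shows "pval left F (- x) = 1 - pval left F x"
  using assms[of x] assms[of "- x"] by (simp add: pval_def)

lemma pval_cdf_symmetric:
  fixes X :: "'a \<Rightarrow> real"
  assumes "prob_space M" "distributed M lborel X f" "\<And>x. f (- x) = f x"
    and "continuous_on UNIV (cdf (distr M borel X))"
  shows "pval left (cdf (distr M borel X)) (- x) = 1 - pval left (cdf (distr M borel X)) x"
proof (rule pval_uminus)
  interpret real_distribution "distr M borel X"
    using assms(1) distributed_measurable[OF assms(2)] by (simp add: prob_space.real_distribution_distr)
  show "cdf (distr M borel X) (- x) = 1 - cdf (distr M borel X) x" for x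
    using distributed_symmetric_distr_uminus[OF assms(2,3)] assms(4)
    by (intro cdf_uminus) (auto simp: continuous_on_eq_continuous_at)
qed

lemma pval_left_inverse:
  fixes F :: "real \<Rightarrow> real"
  assumes "continuous_on UNIV F" "strict_mono F"
  obtains G where "G \<in> borel_measurable borel" "\<And>x. G (pval left F x) = x"
proof -
  obtain G where "G \<in> borel_measurable borel" "\<And>x. G (F x) = x"
    using measurable_left_inverse_strict_mono[OF assms] by blast
  then show thesis
    by (intro that[of "if left then G else (\<lambda>y. G (1 - y))"]) (auto simp: pval_def)
qed

definition central_reflection :: "real \<times> real \<Rightarrow> real \<times> real" where
  "central_reflection z = (1 - fst z, 1 - snd z)"

lemma central_reflection_measurable [measurable]:
  "central_reflection \<in> measurable (lborel \<Otimes>\<^sub>M lborel) (lborel \<Otimes>\<^sub>M lborel)"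
  unfolding central_reflection_def by measurable

lemma central_reflection_involution [simp]: "central_reflection (central_reflection z) = z"
  by (simp add: central_reflection_def)

lemma lborel_distr_one_minus: "distr lborel borel (\<lambda>x::real. 1 - x) = lborel"
proof -
  have "distr lborel borel (\<lambda>x::real. 1 - x) = distr (distr lborel borel uminus) borel ((+) 1)"
    by (subst distr_distr) (auto simp: comp_def)
  also have "\<dots> = lborel" by (simp add: lborel_distr_uminus lborel_distr_plus)
  finally show ?thesis .
qed

lemma lborel_pair_distr_central_reflection:
  "distr (lborel \<Otimes>\<^sub>M lborel) (lborel \<Otimes>\<^sub>M lborel) central_reflection = lborel \<Otimes>\<^sub>M lborel"
proof -
  have "distr (lborel \<Otimes>\<^sub>M lborel) (lborel \<Otimes>\<^sub>M lborel) central_reflection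
      = distr (lborel \<Otimes>\<^sub>M lborel) (borel \<Otimes>\<^sub>M borel) (\<lambda>(x, y). (1 - x, 1 - y))"
    by (rule distr_cong) (auto simp: central_reflection_def intro!: sets_pair_measure_cong)
  also have "\<dots> = lborel \<Otimes>\<^sub>M lborel"
    by (rule pair_measure_distr_invariant)
       (auto simp: lborel_distr_one_minus intro: lborel.sigma_finite_measure_axioms)
  finally show ?thesis .
qed

lemma statistic_reflection_invariant:
  fixes X Z :: "'a \<Rightarrow> real" and u :: "real \<Rightarrow> real"
  assumes law_inv: "distr (distr M (lborel \<Otimes>\<^sub>M lborel) (\<lambda>\<omega>. (u (X \<omega>), Z \<omega>))) (lborel \<Otimes>\<^sub>M lborel) central_reflection
      = distr M (lborel \<Otimes>\<^sub>M lborel) (\<lambda>\<omega>. (u (X \<omega>), Z \<omega>))"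
    and [measurable]: "X \<in> borel_measurable M" "Z \<in> borel_measurable M" "u \<in> borel_measurable borel"
      "uinv \<in> borel_measurable borel"
    and uinv_u: "\<And>x. uinv (u x) = x" and u_uminus: "\<And>x. u (- x) = 1 - u x"
  shows "distr (distr M (lborel \<Otimes>\<^sub>M lborel) (\<lambda>\<omega>. (X \<omega>, Z \<omega>))) (lborel \<Otimes>\<^sub>M lborel) (\<lambda>w. (- fst w, 1 - snd w))
      = distr M (lborel \<Otimes>\<^sub>M lborel) (\<lambda>\<omega>. (X \<omega>, Z \<omega>))"
  using law_inv
  by (rule distr_invariant_transfer[where L="\<lambda>(a, z). (uinv a, z)"])
     (auto simp: central_reflection_def uinv_u u_uminus[symmetric])

lemma (in prob_space) errors_in_variables_reflection_invariant:
  fixes E X Z :: "'a \<Rightarrow> real" and u :: "real \<Rightarrow> real"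
  assumes [measurable]: "E \<in> borel_measurable M" "X \<in> borel_measurable M" "Z \<in> borel_measurable M"
      "u \<in> borel_measurable borel"
    and u_uminus: "\<And>x. u (- x) = 1 - u x"
    and E_sym: "distr (distr M borel E) borel uminus = distr M borel E"
    and XZ_inv: "distr (distr M (lborel \<Otimes>\<^sub>M lborel) (\<lambda>\<omega>. (X \<omega>, Z \<omega>))) (lborel \<Otimes>\<^sub>M lborel)
        (\<lambda>w. (- fst w, 1 - snd w)) = distr M (lborel \<Otimes>\<^sub>M lborel) (\<lambda>\<omega>. (X \<omega>, Z \<omega>))"
    and joint: "distr M (borel \<Otimes>\<^sub>M (lborel \<Otimes>\<^sub>M lborel)) (\<lambda>\<omega>. (E \<omega>, X \<omega>, Z \<omega>))
        = distr M borel E \<Otimes>\<^sub>M distr M (lborel \<Otimes>\<^sub>M lborel) (\<lambda>\<omega>. (X \<omega>, Z \<omega>))"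
  shows "distr (distr M (lborel \<Otimes>\<^sub>M lborel) (\<lambda>\<omega>. (u (X \<omega> + E \<omega>), Z \<omega>))) (lborel \<Otimes>\<^sub>M lborel) central_reflection
      = distr M (lborel \<Otimes>\<^sub>M lborel) (\<lambda>\<omega>. (u (X \<omega> + E \<omega>), Z \<omega>))"
proof -
  have joint_inv: "distr (distr M (borel \<Otimes>\<^sub>M (lborel \<Otimes>\<^sub>M lborel)) (\<lambda>\<omega>. (E \<omega>, X \<omega>, Z \<omega>)))
        (borel \<Otimes>\<^sub>M (lborel \<Otimes>\<^sub>M lborel)) (\<lambda>(e, w). (- e, - fst w, 1 - snd w))
      = distr M (borel \<Otimes>\<^sub>M (lborel \<Otimes>\<^sub>M lborel)) (\<lambda>\<omega>. (E \<omega>, X \<omega>, Z \<omega>))"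
    unfolding joint
    by (rule pair_measure_distr_invariant[OF _ _ _ E_sym XZ_inv])
       (auto intro!: prob_space_imp_sigma_finite prob_space_distr)
  have u_uminus_sum: "u (- x - e) = 1 - u (x + e)" for x e
    using u_uminus[of "x + e"] by simp
  have "(\<lambda>\<omega>. (E \<omega>, X \<omega>, Z \<omega>)) \<in> measurable M (borel \<Otimes>\<^sub>M (lborel \<Otimes>\<^sub>M lborel))"
    by measurable
  moreover have "(\<lambda>(e :: real, w :: real \<times> real). (- e, - fst w, 1 - snd w))
      \<in> measurable (borel \<Otimes>\<^sub>M (lborel \<Otimes>\<^sub>M lborel)) (borel \<Otimes>\<^sub>M (lborel \<Otimes>\<^sub>M lborel))"
    by measurable
  moreover have "(\<lambda>(e, x, z). (u (x + e), z)) \<in> measurable (borel \<Otimes>\<^sub>M (lborel \<Otimes>\<^sub>M lborel)) (lborel \<Otimes>\<^sub>M lborel)"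
    by measurable
  ultimately show ?thesis
    by (rule distr_invariant_transfer[OF joint_inv _ _ _ central_reflection_measurable])
       (auto simp: central_reflection_def u_uminus_sum)
qed

theorem proposition3:
  fixes M :: "'a measure" and X1 X2 eta :: "'a \<Rightarrow> real" and left :: bool
    and f1 g :: "real \<Rightarrow> ennreal" and f0 h :: "real \<times> real \<Rightarrow> ennreal"
  defines "F1 \<equiv> cdf (distr M borel X1)" and "F2 \<equiv> cdf (distr M borel X2)"
  assumes "prob_space M"
    and "X1 \<in> borel_measurable M" and "X2 \<in> borel_measurable M" and "eta \<in> borel_measurable M"
    and "continuous_on UNIV F1" and "strict_mono F1"
    and "continuous_on UNIV F2" and "strict_mono F2"
    and "prob_space.indep_set M {eta -` A \<inter> space M | A. A \<in> sets (borel :: real measure)}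
           {(\<lambda>\<omega>. (X1 \<omega>, X2 \<omega>)) -` B \<inter> space M | B. B \<in> sets (borel :: (real \<times> real) measure)}"
    and "distributed M lborel X1 f1" and "\<forall>x. f1 (- x) = f1 x"
    and "distributed M lborel eta g" and "\<forall>x. g (- x) = g x"
    and "distributed M (lborel \<Otimes>\<^sub>M lborel)
           (\<lambda>\<omega>. (pval left F1 (X1 \<omega>), pval left F2 (X2 \<omega>))) f0"
    and "\<forall>a b. f0 (1 - a, 1 - b) = f0 (a, b)"
    and "distributed M (lborel \<Otimes>\<^sub>M lborel)
           (\<lambda>\<omega>. (pval left F1 (X1 \<omega> + eta \<omega>), pval left F2 (X2 \<omega>))) h"
  shows "AE z in lborel \<Otimes>\<^sub>M lborel. h (1 - fst z, 1 - snd z) = h z"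
proof -
  interpret prob_space M by fact
  note [measurable] = assms(4-6) borel_measurable_continuous_onI[OF assms(7)]
    borel_measurable_continuous_onI[OF assms(9)]
  have p1_meas: "pval left F1 \<in> borel_measurable borel"
    and p2_X2: "(\<lambda>\<omega>. pval left F2 (X2 \<omega>)) \<in> borel_measurable M"
    and X12: "(\<lambda>\<omega>. (X1 \<omega>, X2 \<omega>)) \<in> borel_measurable M"
    by measurable
  have p2_snd: "(\<lambda>z. (fst z, pval left F2 (snd z))) \<in> measurable borel (lborel \<Otimes>\<^sub>M lborel)"
    by (subst borel_prod[symmetric]) measurable
  have p1_uminus: "pval left F1 (- x) = 1 - pval left F1 x" for x
    unfolding F1_def using assms(7,13) by (intro pval_cdf_symmetric[OF assms(3,12)]) (auto simp: F1_def)
  obtain G where G_meas: "G \<in> borel_measurable borel" and G_p1: "\<And>x. G (pval left F1 x) = x"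
    using pval_left_inverse[OF assms(7,8)] by blast
  have pvalues_inv: "distr (distr M (lborel \<Otimes>\<^sub>M lborel) (\<lambda>\<omega>. (pval left F1 (X1 \<omega>), pval left F2 (X2 \<omega>))))
      (lborel \<Otimes>\<^sub>M lborel) central_reflection
      = distr M (lborel \<Otimes>\<^sub>M lborel) (\<lambda>\<omega>. (pval left F1 (X1 \<omega>), pval left F2 (X2 \<omega>)))"
    using assms(17) by (intro distributed_distr_invariant[OF assms(16) lborel_pair_distr_central_reflection])
      (auto simp: central_reflection_def)
  note XZ_inv = statistic_reflection_invariant[OF pvalues_inv assms(4) p2_X2 p1_meas G_meas G_p1 p1_uminus]
  note eta_sym = distributed_symmetric_distr_uminus[OF assms(14) assms(15)[rule_format]]
  note joint = indep_set_distr_pair_compose[OF assms(11,6) X12 p2_snd, unfolded fst_conv snd_conv]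
  note law_inv = errors_in_variables_reflection_invariant[OF assms(6,4) p2_X2 p1_meas p1_uminus eta_sym XZ_inv joint]
  have "AE z in lborel \<Otimes>\<^sub>M lborel. h (central_reflection z) = h z"
    by (rule distributed_AE_invariant[OF assms(18) lborel_pair_distr_central_reflection
          central_reflection_measurable _ law_inv]) simp
  then show ?thesis
    unfolding central_reflection_def .
qed

end
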